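(* Let $\mathfrak{R}$ be a complete rewriting system on $\Sigma$ and let $(w,r_1,r_2)$ be a triple, where $\ell_1$ and $\ell_2$ denote the left-hand sides of the rules $r_1$ and $r_2$ respectively. Assume that $(w,r_1,r_2)$ is not $\tilde c$-defined. Then $\ell_1=xuy$ and $\ell_2=yvx$ for some words $u,v\in\Sigma^*$ and some non-empty words $x,y\in\Sigma^*$.
   Context: $\Sigma^*$ is the free monoid on $\Sigma$; a rewriting system is a set of rules $l\to r$ with $l,r\in\Sigma^*$, complete meaning terminating and confluent; a rule $l\to r$ can be applied to a word if $l$ is a subword (factor) of it. A triple $(w,r_1,r_2)$ consists of a word $w$ and rules $r_1,r_2\in\mathfrak{R}$ such that $r_1$ can be applied to some cyclic conjugate of $w$ and $r_2$ can be applied to some (possibly different) cyclic conjugate of $w$ (cyclic conjugates taken in $\Sigma^*$: $ab$ and $ba$). The triple is $\tilde c$-defined if some single cyclic conjugate of $w$ admits application of both $r_1$ and $r_2$. *)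

theory Defs
  imports Main "HOL-Library.Sublist"
begin

type_synonym 'a rule = "'a list \<times> 'a list"

definition rstep :: "'a rule set \<Rightarrow> ('a list \<times> 'a list) set" where
  "rstep R = {(p @ l @ q, p @ r @ q) | p l r q. (l, r) \<in> R}"

definition terminating :: "'a rule set \<Rightarrow> bool" where
  "terminating R \<longleftrightarrow> wf ((rstep R)\<inverse>)"

definition confluent :: "'a rule set \<Rightarrow> bool" where
  "confluent R \<longleftrightarrow> (\<forall>a b c. (a, b) \<in> (rstep R)\<^sup>* \<and> (a, c) \<in> (rstep R)\<^sup>* \<longrightarrow>
      (\<exists>d. (b, d) \<in> (rstep R)\<^sup>* \<and> (c, d) \<in> (rstep R)\<^sup>*))"

definition complete :: "'a rule set \<Rightarrow> bool" where
  "complete R \<longleftrightarrow> terminating R \<and> confluent R"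

definition cyc_conj :: "'a list \<Rightarrow> 'a list \<Rightarrow> bool" where
  "cyc_conj c w \<longleftrightarrow> (\<exists>a b. w = a @ b \<and> c = b @ a)"

definition applicable :: "'a rule \<Rightarrow> 'a list \<Rightarrow> bool" where
  "applicable r c \<longleftrightarrow> sublist (fst r) c"

definition is_triple :: "'a rule set \<Rightarrow> 'a list \<Rightarrow> 'a rule \<Rightarrow> 'a rule \<Rightarrow> bool" where
  "is_triple R w r1 r2 \<longleftrightarrow> r1 \<in> R \<and> r2 \<in> R \<and>
     (\<exists>c. cyc_conj c w \<and> applicable r1 c) \<and> (\<exists>c. cyc_conj c w \<and> applicable r2 c)"

definition c_defined :: "'a list \<Rightarrow> 'a rule \<Rightarrow> 'a rule \<Rightarrow> bool" where
  "c_defined w r1 r2 \<longleftrightarrow> (\<exists>c. cyc_conj c w \<and> applicable r1 c \<and> applicable r2 c)"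

end

theory Submission
  imports Defs
begin

text \<open>Some rotation \<alpha>\<beta> of w starts with l1 and the rotation \<beta>\<alpha> starts with l2.
  As no single rotation contains both left-hand sides, l1 is not a factor of \<beta>\<alpha>,
  so l1 is not a prefix of \<alpha>: l1 = \<alpha>y with y non-empty and \<beta> = ys.  Symmetrically
  l2 = \<beta>x with x non-empty and \<alpha> = xt, whence l1 = xty and l2 = ysx.\<close>

lemma cyc_conj_iff_rotate: "cyc_conj c w \<longleftrightarrow> (\<exists>k. c = rotate k w)"
proof
  assume "cyc_conj c w"
  then obtain a b where "w = a @ b" "c = b @ a" unfolding cyc_conj_def by blast
  then show "\<exists>k. c = rotate k w" by (metis rotate_append)
next
  assume "\<exists>k. c = rotate k w"
  then obtain k where "c = rotate k w" by blast
  then show "cyc_conj c w" unfolding cyc_conj_def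
    by (metis append_take_drop_id rotate_drop_take)
qed

lemma cyc_conj_sym: "cyc_conj c w \<Longrightarrow> cyc_conj w c"
  unfolding cyc_conj_def by blast

lemma cyc_conj_trans: "cyc_conj c v \<Longrightarrow> cyc_conj v w \<Longrightarrow> cyc_conj c w"
  unfolding cyc_conj_iff_rotate by (metis rotate_rotate)

lemma cyc_conj_starting_with_factor:
  assumes "cyc_conj c w" "sublist l c"
  obtains s where "cyc_conj (l @ s) w"
proof -
  obtain p q where "c = p @ l @ q" using assms(2) by (auto simp: sublist_def)
  then have "cyc_conj (l @ q @ p) c" unfolding cyc_conj_def by (metis append.assoc)
  then show thesis using that cyc_conj_trans[OF _ assms(1)] by blast
qed

lemma prefix_not_factor_of_rotation:
  assumes "prefix l (a @ b)" "\<not> sublist l (b @ a)"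
  obtains y where "y \<noteq> []" "l = a @ y"
proof (cases "length l \<le> length a")
  case True
  then have "prefix l a" using prefix_length_prefix[OF assms(1), of a] by simp
  then obtain r where "a = l @ r" by (auto simp: prefix_def)
  with assms(2) show thesis by simp
next
  case False
  then have "prefix a l" using prefix_length_prefix[OF _ assms(1), of a] by simp
  then obtain y where "l = a @ y" by (auto simp: prefix_def)
  with False show thesis using that by simp
qed

lemma overlap_of_rotation_prefixes:
  assumes "prefix l1 (\<alpha> @ \<beta>)" "prefix l2 (\<beta> @ \<alpha>)"
    and "\<not> sublist l1 (\<beta> @ \<alpha>)" "\<not> sublist l2 (\<alpha> @ \<beta>)"
  shows "\<exists>x u y v. x \<noteq> [] \<and> y \<noteq> [] \<and> l1 = x @ u @ y \<and> l2 = y @ v @ x"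
proof -
  obtain y where y: "y \<noteq> []" "l1 = \<alpha> @ y"
    using prefix_not_factor_of_rotation assms(1,3) by blast
  obtain x where x: "x \<noteq> []" "l2 = \<beta> @ x"
    using prefix_not_factor_of_rotation assms(2,4) by blast
  obtain s where "\<beta> = y @ s" using assms(1) y(2) by (auto simp: prefix_def)
  moreover obtain t where "\<alpha> = x @ t" using assms(2) x(2) by (auto simp: prefix_def)
  ultimately have "l1 = x @ t @ y" "l2 = y @ s @ x" using x(2) y(2) by simp_all
  with x(1) y(1) show ?thesis by blast
qed

theorem lemma5p4:
  fixes R :: "'a rule set" and w :: "'a list" and r1 r2 :: "'a rule"
  assumes "complete R"
    and "is_triple R w r1 r2"
    and "\<not> c_defined w r1 r2"
  shows "\<exists>x u y v. x \<noteq> [] \<and> y \<noteq> [] \<and> fst r1 = x @ u @ y \<and> fst r2 = y @ v @ x"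
proof -
  obtain s where s: "cyc_conj (fst r1 @ s) w"
    using assms(2) cyc_conj_starting_with_factor unfolding is_triple_def applicable_def by metis
  obtain t where t: "cyc_conj (fst r2 @ t) w"
    using assms(2) cyc_conj_starting_with_factor unfolding is_triple_def applicable_def by metis
  have "cyc_conj (fst r2 @ t) (fst r1 @ s)" using cyc_conj_trans[OF t cyc_conj_sym[OF s]] .
  then obtain \<alpha> \<beta> where z1: "fst r1 @ s = \<alpha> @ \<beta>" and z2: "fst r2 @ t = \<beta> @ \<alpha>"
    unfolding cyc_conj_def by blast
  have p1: "prefix (fst r1) (\<alpha> @ \<beta>)" and p2: "prefix (fst r2) (\<beta> @ \<alpha>)"
    using z1 z2 prefixI by metis+
  have "\<not> sublist (fst r1) (\<beta> @ \<alpha>)"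
    using assms(3) t z2 p2 unfolding c_defined_def applicable_def by (metis prefix_imp_sublist)
  moreover have "\<not> sublist (fst r2) (\<alpha> @ \<beta>)"
    using assms(3) s z1 p1 unfolding c_defined_def applicable_def by (metis prefix_imp_sublist)
  ultimately show ?thesis using overlap_of_rotation_prefixes p1 p2 by blast
qed

end
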